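(* Let $\mathcal P$ be an $\mathsf{NPO}\text{-}\mathsf{PB}$ problem. Then there is a polynomial $q$ such that for every instance of $\mathcal P$ of input size $s$, the DLA of QWOA for that instance satisfies $\dim(\mathfrak g_{\mathrm{QWOA},\mathcal P})\le q(s)$; i.e. $\dim(\mathfrak g_{\mathrm{QWOA},\mathcal P})=\mathcal O(\mathrm{poly}(s))$.
   Context: An instance of a combinatorial optimization problem consists of a finite nonempty set $\mathcal S'$ of feasible solutions and a cost function $C:\mathcal S'\to\mathbb R$. Let $N=|\mathcal S'|$. Work in $\mathbb C^N$ with orthonormal basis $\{|z\rangle : z\in\mathcal S'\}$. The problem Hamiltonian is the diagonal matrix $H_C$ with $H_C|z\rangle=C(z)|z\rangle$; the mixing Hamiltonian is the $N\times N$ all-ones matrix $H_M=J$ (equal, up to adding the identity, to the adjacency matrix of the complete graph $K_N$). The DLA of QWOA, $\mathfrak g_{\mathrm{QWOA},\mathcal P}$, for an instance of problem $\mathcal P$ is the real Lie algebra generated by $iH_C$ and $iH_M$, i.e. the smallest real linear subspace of $N\times N$ complex matrices containing $iH_C,iH_M$ and closed under the commutator; its dimension is its real dimension. The class $\mathsf{NPO}$ consists of optimization problems whose solutions have size polynomial in the input size $s$ and whose feasibility and cost can be computed in deterministic polynomial time. $\mathsf{NPO}\text{-}\mathsf{PB}$ consists of $\mathsf{NPO}$ problems whose cost function takes values in a discrete range of size polynomially bounded in $s$ (e.g. integer values in $\{0,1,\dots,r(s)\}$ for a polynomial $r$). *)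

theory Defs
  imports Complex_Main "HOL-Library.Function_Algebras" "HOL-Computational_Algebra.Polynomial"
begin

text \<open>Square complex matrices whose rows and columns are indexed by the feasible
  solutions z \<in> S (the basis vectors |z>) are represented as functions
  'z \<Rightarrow> 'z \<Rightarrow> complex; only the entries on S \<times> S matter.\<close>

type_synonym 'z cmat = "'z \<Rightarrow> 'z \<Rightarrow> complex"

definition mscale :: "real \<Rightarrow> 'z cmat \<Rightarrow> 'z cmat" where
  "mscale r A = (\<lambda>u v. complex_of_real r * A u v)"

definition mmult :: "'z set \<Rightarrow> 'z cmat \<Rightarrow> 'z cmat \<Rightarrow> 'z cmat" where
  "mmult S A B = (\<lambda>u w. \<Sum>v\<in>S. A u v * B v w)"

definition commutator :: "'z set \<Rightarrow> 'z cmat \<Rightarrow> 'z cmat \<Rightarrow> 'z cmat" where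
  "commutator S A B = mmult S A B - mmult S B A"

definition H_C :: "'z set \<Rightarrow> ('z \<Rightarrow> real) \<Rightarrow> 'z cmat" where
  "H_C S C = (\<lambda>u v. if u \<in> S \<and> v = u then complex_of_real (C u) else 0)"

definition H_M :: "'z set \<Rightarrow> 'z cmat" where
  "H_M S = (\<lambda>u v. if u \<in> S \<and> v \<in> S then 1 else 0)"

definition imul :: "'z cmat \<Rightarrow> 'z cmat" where
  "imul A = (\<lambda>u v. \<i> * A u v)"

definition lie_closure :: "'z set \<Rightarrow> 'z cmat set \<Rightarrow> 'z cmat set" where
  "lie_closure S G = \<Inter>{L. module.subspace mscale L \<and> G \<subseteq> L \<and>
       (\<forall>A\<in>L. \<forall>B\<in>L. commutator S A B \<in> L)}"

definition real_dim :: "'z cmat set \<Rightarrow> nat" where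
  "real_dim L = vector_space.dim mscale L"

definition qwoa_dla :: "'z set \<Rightarrow> ('z \<Rightarrow> real) \<Rightarrow> 'z cmat set" where
  "qwoa_dla S C = lie_closure S {imul (H_C S C), imul (H_M S)}"

text \<open>An NPO-PB problem, abstracted: instances are bit strings x in the set I of valid
  instances, with input size s = length x; the feasible solutions feas x are a nonempty
  set of bit strings of length polynomially bounded in s; the cost function cost x
  takes on the feasible solutions a range of values whose size is polynomially bounded
  in s.  (Polynomial-time computability of feasibility/cost is not modelled.)\<close>
definition npo_pb :: "bool list set \<Rightarrow> (bool list \<Rightarrow> bool list set)
    \<Rightarrow> (bool list \<Rightarrow> bool list \<Rightarrow> real) \<Rightarrow> bool" where
  "npo_pb I feas cost \<longleftrightarrow>
     (\<forall>x\<in>I. feas x \<noteq> {}) \<and>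
     (\<exists>p::nat poly. \<forall>x\<in>I. \<forall>z\<in>feas x. length z \<le> poly p (length x)) \<and>
     (\<exists>r::nat poly. \<forall>x\<in>I. card (cost x ` feas x) \<le> poly r (length x))"

end

theory Submission
  imports Defs
begin

text \<open>Every matrix in the Lie algebra generated by i H_C and i H_M has the form
  diag(f(C u)) + (g(C u, C v))_{u,v}: apart from a diagonal term depending only on the cost,
  its entries depend only on the costs of the row and column index.  Such matrices form an
  associative algebra containing both generators (in a product, the sum over the
  intermediate index again depends only on the two outer costs), and with k distinct cost
  values they are spanned over the reals by 2(k + k^2) matrices.  For an NPO-PB problem k is
  polynomial in the input size.\<close>

interpretation cmat: vector_space mscale
  by unfold_locales (auto simp: mscale_def fun_eq_iff algebra_simps)

lemma cmat_subspace_iff: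
  "cmat.subspace L \<longleftrightarrow>
     0 \<in> L \<and> (\<forall>A\<in>L. \<forall>B\<in>L. A + B \<in> L) \<and> (\<forall>r. \<forall>A\<in>L. mscale r A \<in> L)"
  by (rule module.subspace_def[OF cmat.module_axioms])

lemma lie_closure_least:
  assumes "cmat.subspace L" "G \<subseteq> L" "\<And>A B. A \<in> L \<Longrightarrow> B \<in> L \<Longrightarrow> commutator S A B \<in> L"
  shows "lie_closure S G \<subseteq> L"
  using assms unfolding lie_closure_def by blast

lemma sum_cmat_apply:
  "finite P \<Longrightarrow> (\<Sum>p\<in>P. (F p :: 'z cmat)) u v = (\<Sum>p\<in>P. F p u v)"
  by (induction P rule: finite_induct) auto

definition cscale :: "complex \<Rightarrow> 'z cmat \<Rightarrow> 'z cmat" where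
  "cscale z A = (\<lambda>u v. z * A u v)"

lemma cscale_in_span:
  assumes "A \<in> W" "imul A \<in> W"
  shows "cscale z A \<in> cmat.span W"
proof -
  have "z * a = complex_of_real (Re z) * a + complex_of_real (Im z) * (\<i> * a)" for a
    by (subst complex_eq[of z]) (simp add: algebra_simps)
  then have "cscale z A = mscale (Re z) A + mscale (Im z) (imul A)"
    by (simp add: cscale_def mscale_def imul_def fun_eq_iff)
  then show ?thesis
    using assms by (simp add: cmat.span_add cmat.span_scale cmat.span_base)
qed

definition level_matrix ::
    "'z set \<Rightarrow> ('z \<Rightarrow> real) \<Rightarrow> (real \<Rightarrow> complex) \<Rightarrow> (real \<Rightarrow> real \<Rightarrow> complex) \<Rightarrow> 'z cmat" where
  "level_matrix S C f g =
     (\<lambda>u v. if u \<in> S \<and> v \<in> S then (if u = v then f (C u) else 0) + g (C u) (C v) else 0)"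

definition level_algebra :: "'z set \<Rightarrow> ('z \<Rightarrow> real) \<Rightarrow> 'z cmat set" where
  "level_algebra S C = {level_matrix S C f g | f g. True}"

lemma level_matrix_in_level_algebra [simp]: "level_matrix S C f g \<in> level_algebra S C"
  unfolding level_algebra_def by blast

lemma level_matrix_add:
  "level_matrix S C f g + level_matrix S C h k =
     level_matrix S C (\<lambda>c. f c + h c) (\<lambda>c d. g c d + k c d)"
  by (auto simp: level_matrix_def fun_eq_iff)

lemma mscale_level_matrix:
  "mscale r (level_matrix S C f g) = level_matrix S C (\<lambda>c. r * f c) (\<lambda>c d. r * g c d)"
  by (auto simp: level_matrix_def mscale_def fun_eq_iff algebra_simps)

lemma mmult_level_matrix:
  assumes "finite S"
  shows "mmult S (level_matrix S C f g) (level_matrix S C h k) =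
     level_matrix S C (\<lambda>c. f c * h c)
       (\<lambda>c d. f c * k c d + g c d * h d + (\<Sum>v\<in>S. g c (C v) * k (C v) d))"
proof (intro ext)
  fix u w
  show "mmult S (level_matrix S C f g) (level_matrix S C h k) u w = level_matrix S C
      (\<lambda>c. f c * h c) (\<lambda>c d. f c * k c d + g c d * h d + (\<Sum>v\<in>S. g c (C v) * k (C v) d)) u w"
  proof (cases "u \<in> S \<and> w \<in> S")
    case True
    have "level_matrix S C f g u v * level_matrix S C h k v w =
        (if v = u then (if u = w then f (C u) * h (C u) else 0) else 0)
        + (if v = u then f (C u) * k (C u) (C w) else 0)
        + (if v = w then g (C u) (C w) * h (C w) else 0)
        + g (C u) (C v) * k (C v) (C w)" if "v \<in> S" for v
      using True that by (auto simp: level_matrix_def algebra_simps)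
    then show ?thesis
      using True assms by (simp add: mmult_def level_matrix_def sum.distrib cong: sum.cong)
  next
    case False
    then show ?thesis by (auto simp: mmult_def level_matrix_def)
  qed
qed

lemma level_algebra_cases:
  assumes "A \<in> level_algebra S C"
  obtains f g where "A = level_matrix S C f g"
  using assms unfolding level_algebra_def by blast

lemma subspace_level_algebra: "cmat.subspace (level_algebra S C)"
  unfolding cmat_subspace_iff
proof (intro conjI ballI allI)
  have "0 = level_matrix S C (\<lambda>_. 0) (\<lambda>_ _. 0)"
    by (simp add: level_matrix_def fun_eq_iff)
  then show "0 \<in> level_algebra S C" by (metis level_matrix_in_level_algebra)
next
  fix A B assume "A \<in> level_algebra S C" "B \<in> level_algebra S C"
  then show "A + B \<in> level_algebra S C"
    by (elim level_algebra_cases) (simp add: level_matrix_add)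
next
  fix r A assume "A \<in> level_algebra S C"
  then show "mscale r A \<in> level_algebra S C"
    by (elim level_algebra_cases) (simp add: mscale_level_matrix)
qed

lemma commutator_level_algebra:
  assumes "finite S" "A \<in> level_algebra S C" "B \<in> level_algebra S C"
  shows "commutator S A B \<in> level_algebra S C"
proof -
  have "mmult S A B \<in> level_algebra S C" "mmult S B A \<in> level_algebra S C"
    using assms(2,3) by (elim level_algebra_cases; simp add: mmult_level_matrix assms(1))+
  then show ?thesis
    unfolding commutator_def by (rule cmat.subspace_diff[OF subspace_level_algebra])
qed

lemma qwoa_dla_subset_level_algebra:
  assumes "finite S"
  shows "qwoa_dla S C \<subseteq> level_algebra S C"
  unfolding qwoa_dla_def
proof (rule lie_closure_least[OF subspace_level_algebra _ commutator_level_algebra[OF assms]])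
  have "imul (H_C S C) = level_matrix S C (\<lambda>c. \<i> * c) (\<lambda>_ _. 0)"
    "imul (H_M S) = level_matrix S C (\<lambda>_. 0) (\<lambda>_ _. \<i>)"
    by (auto simp: imul_def H_C_def H_M_def level_matrix_def fun_eq_iff)
  then show "{imul (H_C S C), imul (H_M S)} \<subseteq> level_algebra S C" by simp
qed

definition level_diag :: "'z set \<Rightarrow> ('z \<Rightarrow> real) \<Rightarrow> real \<Rightarrow> 'z cmat" where
  "level_diag S C c = level_matrix S C (\<lambda>x. if x = c then 1 else 0) (\<lambda>_ _. 0)"

definition level_block :: "'z set \<Rightarrow> ('z \<Rightarrow> real) \<Rightarrow> real \<times> real \<Rightarrow> 'z cmat" where
  "level_block S C p = level_matrix S C (\<lambda>_. 0) (\<lambda>x y. if (x, y) = p then 1 else 0)"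

definition level_basis :: "'z set \<Rightarrow> ('z \<Rightarrow> real) \<Rightarrow> 'z cmat set" where
  "level_basis S C =
     (let D = level_diag S C ` C ` S; E = level_block S C ` (C ` S \<times> C ` S)
      in D \<union> imul ` D \<union> E \<union> imul ` E)"

lemma level_matrix_eq_sum:
  assumes "finite S"
  shows "level_matrix S C f g =
     (\<Sum>c\<in>C ` S. cscale (f c) (level_diag S C c)) +
     (\<Sum>p\<in>C ` S \<times> C ` S. cscale (g (fst p) (snd p)) (level_block S C p))"
proof (intro ext)
  fix u v
  have fin: "finite (C ` S)" "finite (C ` S \<times> C ` S)" using assms by auto
  have "(\<Sum>c\<in>C ` S. f c * level_diag S C c u v) =
      (\<Sum>c\<in>C ` S. if c = C u then (if u \<in> S \<and> v \<in> S \<and> u = v then f (C u) else 0) else 0)"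
    by (intro sum.cong) (auto simp: level_diag_def level_matrix_def)
  also have "\<dots> = (if u \<in> S \<and> v \<in> S \<and> u = v then f (C u) else 0)"
    using fin(1) by (auto simp: sum.delta)
  finally have diag: "(\<Sum>c\<in>C ` S. f c * level_diag S C c u v) =
      (if u \<in> S \<and> v \<in> S \<and> u = v then f (C u) else 0)" .
  have "(\<Sum>p\<in>C ` S \<times> C ` S. g (fst p) (snd p) * level_block S C p u v) =
      (\<Sum>p\<in>C ` S \<times> C ` S. if p = (C u, C v) then (if u \<in> S \<and> v \<in> S then g (C u) (C v) else 0) else 0)"
    by (intro sum.cong) (auto simp: level_block_def level_matrix_def)
  also have "\<dots> = (if u \<in> S \<and> v \<in> S then g (C u) (C v) else 0)"
    using fin(2) by (auto simp: sum.delta)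
  finally have block: "(\<Sum>p\<in>C ` S \<times> C ` S. g (fst p) (snd p) * level_block S C p u v) =
      (if u \<in> S \<and> v \<in> S then g (C u) (C v) else 0)" .
  show "level_matrix S C f g u v = ((\<Sum>c\<in>C ` S. cscale (f c) (level_diag S C c)) +
     (\<Sum>p\<in>C ` S \<times> C ` S. cscale (g (fst p) (snd p)) (level_block S C p))) u v"
    by (simp add: sum_cmat_apply[OF fin(1)] sum_cmat_apply[OF fin(2)] cscale_def diag block)
      (simp add: level_matrix_def)
qed

lemma level_algebra_subset_span:
  assumes "finite S"
  shows "level_algebra S C \<subseteq> cmat.span (level_basis S C)"
proof
  fix A assume "A \<in> level_algebra S C"
  then obtain f g where A: "A = level_matrix S C f g" by (rule level_algebra_cases)
  have "level_matrix S C f g \<in> cmat.span (level_basis S C)"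
    unfolding level_matrix_eq_sum[OF assms]
    by (intro cmat.span_add cmat.span_sum cscale_in_span) (auto simp: level_basis_def)
  with A show "A \<in> cmat.span (level_basis S C)" by simp
qed

lemma card_level_basis:
  assumes "finite S"
  shows "card (level_basis S C) \<le> 2 * (card (C ` S) + card (C ` S) ^ 2)"
proof -
  define D where "D = level_diag S C ` C ` S"
  define E where "E = level_block S C ` (C ` S \<times> C ` S)"
  have "card D \<le> card (C ` S)" "card E \<le> card (C ` S) ^ 2"
    unfolding D_def E_def power2_eq_square
    by (metis card_image_le card_cartesian_product assms finite_imageI finite_cartesian_product)+
  moreover have "card (imul ` D) \<le> card D" "card (imul ` E) \<le> card E"
    using assms by (simp_all add: D_def E_def card_image_le)
  moreover have "card (level_basis S C) \<le> card D + card (imul ` D) + card E + card (imul ` E)"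
    unfolding level_basis_def Let_def D_def[symmetric] E_def[symmetric]
    using card_Un_le[of "D \<union> imul ` D \<union> E" "imul ` E"] card_Un_le[of "D \<union> imul ` D" E]
      card_Un_le[of D "imul ` D"] by linarith
  ultimately show ?thesis by simp
qed

theorem real_dim_qwoa_dla_le:
  assumes "finite S"
  shows "real_dim (qwoa_dla S C) \<le> 2 * (card (C ` S) + card (C ` S) ^ 2)"
proof -
  have "qwoa_dla S C \<subseteq> cmat.span (level_basis S C)"
    using qwoa_dla_subset_level_algebra level_algebra_subset_span assms by blast
  moreover have "finite (level_basis S C)"
    using assms by (simp add: level_basis_def Let_def)
  ultimately have "real_dim (qwoa_dla S C) \<le> card (level_basis S C)"
    unfolding real_dim_def by (rule cmat.dim_le_card)
  then show ?thesis using card_level_basis[OF assms, of C] by linarith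
qed

theorem corollary1:
  fixes I :: "bool list set"
    and feas :: "bool list \<Rightarrow> bool list set"
    and cost :: "bool list \<Rightarrow> bool list \<Rightarrow> real"
  assumes "npo_pb I feas cost"
  shows "\<exists>q::nat poly. \<forall>x\<in>I. real_dim (qwoa_dla (feas x) (cost x)) \<le> poly q (length x)"
proof -
  obtain p r :: "nat poly"
    where p: "\<forall>x\<in>I. \<forall>z\<in>feas x. length z \<le> poly p (length x)"
      and r: "\<forall>x\<in>I. card (cost x ` feas x) \<le> poly r (length x)"
    using assms unfolding npo_pb_def by blast
  show ?thesis
  proof (intro exI[of _ "[:2:] * (r + r * r)"] ballI)
    fix x assume "x \<in> I"
    have "feas x \<subseteq> {xs. set xs \<subseteq> UNIV \<and> length xs \<le> poly p (length x)}"
      using p \<open>x \<in> I\<close> by auto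
    then have "finite (feas x)"
      by (rule finite_subset) (rule finite_lists_length_le, simp)
    then have "real_dim (qwoa_dla (feas x) (cost x))
        \<le> 2 * (card (cost x ` feas x) + card (cost x ` feas x) ^ 2)"
      by (rule real_dim_qwoa_dla_le)
    also have "\<dots> \<le> 2 * (poly r (length x) + poly r (length x) ^ 2)"
      using r \<open>x \<in> I\<close> by (intro mult_left_mono add_mono power_mono) auto
    finally show "real_dim (qwoa_dla (feas x) (cost x)) \<le> poly ([:2:] * (r + r * r)) (length x)"
      by (simp add: power2_eq_square)
  qed
qed

end
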